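(* Let $q$ be a prime, $r\geq 2$ and $k\geq 4$, and let $(f_1,f_2,\dots,f_r)$ be an $r$-tuple of Latin hypercubes of order $q$ and dimension $k$ (not necessarily mutually orthogonal). Suppose that for every two distinct indices $i,j\in[r]$ and every way of fixing the same $k-3$ of the $k$ arguments to the same values in both $f_i$ and $f_j$, the resulting pair of Latin hypercubes of dimension $3$ is a linear pair. Then $(f_1,f_2,\dots,f_r)$ is a linear $r$-tuple of Latin hypercubes.
   Context: $[m]=\{1,\dots,m\}$. A Latin hypercube of order $q$ and dimension $k$ is a function $f:\mathbb{F}_q^k\to\mathbb{F}_q$ such that, whenever any $k-1$ of the arguments are fixed, the resulting function of the remaining argument is a bijection of $\mathbb{F}_q$ (equivalently, every $q\times q$ subarray obtained by fixing $k-2$ arguments is a Latin square). Fixing some arguments of a Latin hypercube to constants yields a Latin hypercube of smaller dimension in the remaining arguments. An $r$-tuple $(f_1,\dots,f_r)$ of Latin hypercubes of order $q$ and dimension $k$ is linear if there exist permutations $\alpha_1,\dots,\alpha_k,\beta_1,\dots,\beta_r$ of $\mathbb{F}_q$ and coefficients $a_{i,j}\in\mathbb{F}_q$ ($i\in[r]$, $j\in[k]$) such that for every $i\in[r]$ and all $x\in\mathbb{F}_q^k$, $\beta_i(f_i(x_1,\dots,x_k))=a_{i,1}\alpha_1(x_1)+\cdots+a_{i,k}\alpha_k(x_k)$. A linear pair is a linear $2$-tuple. *)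

theory Defs
  imports "HOL-Library.FuncSet" "HOL-Computational_Algebra.Primes"
begin

text \<open>Points of F_q^I are functions from the finite index set I into the field,
  extensional outside I (PiE).\<close>

definition latin_hypercube :: "nat set \<Rightarrow> ((nat \<Rightarrow> 'a) \<Rightarrow> 'a) \<Rightarrow> bool" where
  "latin_hypercube I f \<longleftrightarrow>
     (\<forall>x \<in> PiE I (\<lambda>_. UNIV). \<forall>i \<in> I. bij (\<lambda>t. f (x(i := t))))"

definition linear_tuple ::
  "nat set \<Rightarrow> nat set \<Rightarrow> (nat \<Rightarrow> (nat \<Rightarrow> 'a::field) \<Rightarrow> 'a) \<Rightarrow> bool" where
  "linear_tuple I R fs \<longleftrightarrow>
     (\<exists>(\<alpha> :: nat \<Rightarrow> 'a \<Rightarrow> 'a) (\<beta> :: nat \<Rightarrow> 'a \<Rightarrow> 'a) (a :: nat \<Rightarrow> nat \<Rightarrow> 'a).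
        (\<forall>j \<in> I. bij (\<alpha> j)) \<and> (\<forall>m \<in> R. bij (\<beta> m)) \<and>
        (\<forall>m \<in> R. \<forall>x \<in> PiE I (\<lambda>_. UNIV).
            \<beta> m (fs m x) = (\<Sum>j \<in> I. a m j * \<alpha> j (x j))))"

definition fix_args :: "nat set \<Rightarrow> (nat \<Rightarrow> 'a) \<Rightarrow> ((nat \<Rightarrow> 'a) \<Rightarrow> 'a) \<Rightarrow> (nat \<Rightarrow> 'a) \<Rightarrow> 'a" where
  "fix_args S c f = (\<lambda>y. f (\<lambda>j. if j \<in> S then y j else c j))"

end

theory Submission
  imports Defs "HOL-Number_Theory.Residues"
begin

text \<open>
  Over a prime field every additive map is a scalar multiplication. Consequently, if two
  permutations \<open>\<beta>\<close> and \<open>\<gamma>\<close> both turn f into a sum of one-variable functions on a box of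
  dimension at least 2, then \<open>\<gamma>\<close> is an affine function of \<open>\<beta>\<close>: the rectangle identity in two
  directions makes \<open>\<gamma> \<circ> \<beta>\<inverse>\<close>, up to translation, additive. So a permutation linearising f on a
  2-dimensional sub-box linearises f on every box on which f is linear at all.

  Linearity on all boxes of dimension n \<ge> 3 then propagates to dimension n + 1: the boxes
  obtained by dropping one of four chosen coordinates overlap in boxes of dimension at least 2,
  and separability on two hyperplanes through a point and on all hyperplanes parallel to a third
  forces separability on the whole box. This makes every f_m linear. Finally, the linear pairs on
  3-dimensional boxes through a common point show that in each direction the one-variable
  increments of all linearised f_m are proportional to those of f_1, which is a linear r-tuple.
\<close>

section \<open>Additive maps on prime fields\<close>

lemma range_of_nat_prime_card:
  assumes "prime (card (UNIV :: 'a set))"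
  shows "range (of_nat :: nat \<Rightarrow> 'a::{field,finite}) = UNIV"
proof -
  have "CHAR('a) \<noteq> 1"
    using of_nat_eq_0_iff_char_dvd[of 1, where 'a='a] by auto
  then have char: "CHAR('a) = card (UNIV :: 'a set)"
    using CHAR_dvd_CARD[where 'a='a] assms prime_nat_iff by blast
  have "inj_on (of_nat :: nat \<Rightarrow> 'a) {..<card (UNIV :: 'a set)}"
    by (rule inj_onI) (auto simp: of_nat_eq_iff_cong_CHAR char cong_less_modulus_unique_nat)
  then have "card ((of_nat :: nat \<Rightarrow> 'a) ` {..<card (UNIV :: 'a set)}) = card (UNIV :: 'a set)"
    by (simp add: card_image)
  then have "(of_nat :: nat \<Rightarrow> 'a) ` {..<card (UNIV :: 'a set)} = UNIV"
    by (simp add: card_eq_UNIV_imp_eq_UNIV)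
  then show ?thesis by auto
qed

lemma additive_imp_scalar_mult:
  fixes T :: "'a::{field,finite} \<Rightarrow> 'a"
  assumes "prime (card (UNIV :: 'a set))" and add: "\<And>u v. T (u + v) = T u + T v"
  shows "T u = T 1 * u"
proof -
  have "T 0 + T 0 = T 0 + 0"
    using add[of 0 0] by simp
  then have "T 0 = 0"
    by (rule add_left_imp_eq)
  then have "T (of_nat n) = of_nat n * T 1" for n
    by (induction n) (simp_all add: add algebra_simps)
  moreover obtain n where "u = of_nat n"
    using range_of_nat_prime_card[OF assms(1)] by (metis UNIV_I imageE)
  ultimately show ?thesis by simp
qed

section \<open>Separable functions\<close>

lemma sum_fun_upd_eq:
  fixes \<phi> :: "nat \<Rightarrow> 'a \<Rightarrow> 'b::ab_group_add"
  assumes "finite K" "j \<in> K"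
  shows "(\<Sum>i\<in>K. \<phi> i ((x(j := t)) i)) = (\<Sum>i\<in>K. \<phi> i (x i)) - \<phi> j (x j) + \<phi> j t"
proof -
  have "(\<Sum>i\<in>K - {j}. \<phi> i ((x(j := t)) i)) = (\<Sum>i\<in>K - {j}. \<phi> i (x i))"
    by (rule sum.cong) auto
  then show ?thesis
    using assms by (simp add: sum.remove algebra_simps)
qed

definition separable :: "nat set \<Rightarrow> (nat \<Rightarrow> 'a) \<Rightarrow> ((nat \<Rightarrow> 'a) \<Rightarrow> 'b::comm_monoid_add) \<Rightarrow> bool" where
  "separable K z g \<longleftrightarrow>
     (\<exists>\<phi> c. \<forall>x. (\<forall>i. i \<notin> K \<longrightarrow> x i = z i) \<longrightarrow> g x = c + (\<Sum>j\<in>K. \<phi> j (x j)))"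

lemma separableI:
  assumes "\<And>x. \<forall>i. i \<notin> K \<longrightarrow> x i = z i \<Longrightarrow> g x = c + (\<Sum>j\<in>K. \<phi> j (x j))"
  shows "separable K z g"
  unfolding separable_def using assms by blast

lemma separable_increments:
  fixes g :: "(nat \<Rightarrow> 'a) \<Rightarrow> 'b::ab_group_add"
  assumes "separable K z g" "finite K" "\<forall>i. i \<notin> K \<longrightarrow> x i = z i"
  shows "g x = g z + (\<Sum>j\<in>K. g (z(j := x j)) - g z)"
proof -
  obtain \<phi> c where \<phi>: "\<And>x. \<forall>i. i \<notin> K \<longrightarrow> x i = z i \<Longrightarrow> g x = c + (\<Sum>j\<in>K. \<phi> j (x j))"
    using assms(1) unfolding separable_def by blast
  have gz: "g z = c + (\<Sum>j\<in>K. \<phi> j (z j))"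
    by (rule \<phi>) simp
  have "g (z(j := t)) - g z = \<phi> j t - \<phi> j (z j)" if "j \<in> K" for j t
  proof -
    have "g (z(j := t)) = c + (\<Sum>i\<in>K. \<phi> i ((z(j := t)) i))"
      using that by (intro \<phi>) auto
    then show ?thesis
      unfolding sum_fun_upd_eq[OF assms(2) that] by (simp add: gz)
  qed
  then have "(\<Sum>j\<in>K. g (z(j := x j)) - g z) = (\<Sum>j\<in>K. \<phi> j (x j)) - (\<Sum>j\<in>K. \<phi> j (z j))"
    by (simp add: sum_subtractf)
  then show ?thesis
    using \<phi>[OF assms(3)] gz by simp
qed

lemma separable_subset:
  fixes g :: "(nat \<Rightarrow> 'a) \<Rightarrow> 'b::comm_monoid_add"
  assumes "separable K z g" "finite K" "L \<subseteq> K"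
  shows "separable L z g"
proof -
  obtain \<phi> c where \<phi>: "\<And>x. \<forall>i. i \<notin> K \<longrightarrow> x i = z i \<Longrightarrow> g x = c + (\<Sum>j\<in>K. \<phi> j (x j))"
    using assms(1) unfolding separable_def by blast
  show ?thesis
  proof (rule separableI)
    fix x
    assume x: "\<forall>i. i \<notin> L \<longrightarrow> x i = z i"
    have "g x = c + (\<Sum>j\<in>K. \<phi> j (x j))"
      using x assms(3) by (intro \<phi>) auto
    also have "\<dots> = c + ((\<Sum>j\<in>K - L. \<phi> j (x j)) + (\<Sum>j\<in>L. \<phi> j (x j)))"
      by (subst sum.subset_diff[OF assms(3,2)]) (rule refl)
    also have "(\<Sum>j\<in>K - L. \<phi> j (x j)) = (\<Sum>j\<in>K - L. \<phi> j (z j))"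
      using x by (intro sum.cong) auto
    finally show "g x = (c + (\<Sum>j\<in>K - L. \<phi> j (z j))) + (\<Sum>j\<in>L. \<phi> j (x j))"
      by (simp add: add.assoc)
  qed
qed

lemma separable_rebase:
  assumes "\<forall>i. i \<notin> K \<longrightarrow> w i = z i"
  shows "separable K w g \<longleftrightarrow> separable K z g"
proof -
  have "(\<forall>i. i \<notin> K \<longrightarrow> x i = w i) \<longleftrightarrow> (\<forall>i. i \<notin> K \<longrightarrow> x i = z i)" for x :: "nat \<Rightarrow> 'a"
    using assms by auto
  then show ?thesis
    unfolding separable_def by simp
qed

lemma separable_affine:
  fixes g :: "(nat \<Rightarrow> 'a) \<Rightarrow> 'b::comm_ring"
  assumes "separable K z g"
  shows "separable K z (\<lambda>x. a * g x + b)"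
proof -
  obtain \<phi> c where \<phi>: "\<And>x. \<forall>i. i \<notin> K \<longrightarrow> x i = z i \<Longrightarrow> g x = c + (\<Sum>j\<in>K. \<phi> j (x j))"
    using assms unfolding separable_def by blast
  show ?thesis
  proof (rule separableI)
    fix x
    assume "\<forall>i. i \<notin> K \<longrightarrow> x i = z i"
    then show "a * g x + b = (a * c + b) + (\<Sum>j\<in>K. a * \<phi> j (x j))"
      unfolding \<phi>[OF \<open>\<forall>i. i \<notin> K \<longrightarrow> x i = z i\<close>] distrib_left sum_distrib_left by (simp only: add_ac)
  qed
qed

lemma separable_rectangle:
  fixes g :: "(nat \<Rightarrow> 'a) \<Rightarrow> 'b::ab_group_add"
  assumes "separable K z g" "finite K" "j \<in> K" "l \<in> K" "j \<noteq> l"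
  shows "g (z(j := a, l := b)) = g (z(j := a)) + g (z(l := b)) - g z"
proof -
  obtain \<phi> c where \<phi>: "\<And>x. \<forall>i. i \<notin> K \<longrightarrow> x i = z i \<Longrightarrow> g x = c + (\<Sum>j\<in>K. \<phi> j (x j))"
    using assms(1) unfolding separable_def by blast
  have upd: "g (y(l := b)) = g y - \<phi> l (y l) + \<phi> l b" if y: "\<forall>i. i \<notin> K \<longrightarrow> y i = z i" for y
  proof -
    have "g (y(l := b)) = c + (\<Sum>i\<in>K. \<phi> i ((y(l := b)) i))"
      using y assms(4) by (intro \<phi>) auto
    then show ?thesis
      unfolding sum_fun_upd_eq[OF assms(2,4)] \<phi>[OF y] by (simp add: algebra_simps)
  qed
  have "g (z(j := a, l := b)) - g (z(j := a)) = \<phi> l b - \<phi> l (z l)"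
    using upd[of "z(j := a)"] assms(3,5) by auto
  moreover have "g (z(l := b)) - g z = \<phi> l b - \<phi> l (z l)"
    using upd[of z] by simp
  ultimately have "g (z(j := a, l := b)) = g (z(j := a)) + (g (z(l := b)) - g z)"
    by (metis add.commute diff_add_cancel)
  then show ?thesis
    by (simp add: add_diff_eq)
qed

lemma separable_reparametrization_affine:
  fixes f :: "(nat \<Rightarrow> 'a) \<Rightarrow> 'b::{field,finite}" and \<beta> \<gamma> :: "'b \<Rightarrow> 'b"
  assumes "prime (card (UNIV :: 'b set))" "finite K" "j \<in> K" "l \<in> K" "j \<noteq> l"
    and "bij (\<lambda>t. f (z(j := t)))" "bij (\<lambda>t. f (z(l := t)))"
    and "bij \<beta>" "separable K z (\<beta> \<circ> f)" "separable K z (\<gamma> \<circ> f)"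
  shows "\<exists>c d. \<forall>u. \<gamma> u = c * \<beta> u + d"
proof -
  define h where "h s = \<gamma> (inv_into UNIV \<beta> (\<beta> (f z) + s)) - \<gamma> (f z)" for s
  have h: "h (\<beta> y - \<beta> (f z)) = \<gamma> y - \<gamma> (f z)" for y
    using bij_is_inj[OF assms(8)] by (simp add: h_def)
  have hit: "\<exists>t. \<beta> (f (z(i := t))) - \<beta> (f z) = u" if slice: "bij (\<lambda>t. f (z(i := t)))" for i u
  proof -
    from bij_comp[OF slice assms(8)] have "surj (\<lambda>t. \<beta> (f (z(i := t))))"
      by (simp add: bij_is_surj comp_def)
    then obtain t where "u + \<beta> (f z) = \<beta> (f (z(i := t)))"
      by (rule surjE)
    then have "\<beta> (f (z(i := t))) - \<beta> (f z) = u"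
      by (metis add_diff_cancel)
    then show ?thesis ..
  qed
  have "h (u + v) = h u + h v" for u v
  proof -
    obtain a where a: "\<beta> (f (z(j := a))) - \<beta> (f z) = u"
      using hit[OF assms(6)] by blast
    obtain b where b: "\<beta> (f (z(l := b))) - \<beta> (f z) = v"
      using hit[OF assms(7)] by blast
    have rect_\<beta>: "\<beta> (f (z(j := a, l := b))) = \<beta> (f (z(j := a))) + \<beta> (f (z(l := b))) - \<beta> (f z)"
      and rect_\<gamma>: "\<gamma> (f (z(j := a, l := b))) = \<gamma> (f (z(j := a))) + \<gamma> (f (z(l := b))) - \<gamma> (f z)"
      using separable_rectangle[OF assms(9) assms(2-5)] separable_rectangle[OF assms(10) assms(2-5)]
      by simp_all
    have "u + v = \<beta> (f (z(j := a, l := b))) - \<beta> (f z)"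
      unfolding rect_\<beta> a[symmetric] b[symmetric] by (simp add: algebra_simps)
    then have "h (u + v) = \<gamma> (f (z(j := a, l := b))) - \<gamma> (f z)"
      by (simp add: h)
    also have "\<dots> = h u + h v"
      unfolding rect_\<gamma> a[symmetric] b[symmetric] h by (simp add: algebra_simps)
    finally show ?thesis .
  qed
  then have lin: "h s = h 1 * s" for s
    by (rule additive_imp_scalar_mult[OF assms(1)])
  have "\<gamma> u = h 1 * \<beta> u + (\<gamma> (f z) - h 1 * \<beta> (f z))" for u
  proof -
    have "\<gamma> u = h (\<beta> u - \<beta> (f z)) + \<gamma> (f z)"
      by (simp add: h)
    also have "\<dots> = h 1 * \<beta> u + (\<gamma> (f z) - h 1 * \<beta> (f z))"
      unfolding lin[of "\<beta> u - \<beta> (f z)"] by (simp add: algebra_simps)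
    finally show ?thesis .
  qed
  then show ?thesis
    by (intro exI allI)
qed

lemma separable_from_slices:
  fixes g :: "(nat \<Rightarrow> 'a) \<Rightarrow> 'b::ab_group_add"
  assumes "finite K" "p \<in> K" "s \<in> K" "s' \<in> K" "p \<noteq> s" "p \<noteq> s'" "s \<noteq> s'"
    and "separable (K - {s}) z g" "separable (K - {s'}) z g"
    and "\<And>v. separable (K - {p}) (z(p := v)) g"
  shows "separable K z g"
proof -
  have rect: "g (z(p := v, j := t)) = g (z(p := v)) + g (z(j := t)) - g z"
    if "j \<in> K - {p}" for j v t
  proof (cases "j = s")
    case True
    show ?thesis
      by (rule separable_rectangle[OF assms(9)]) (use True that assms(1-7) in auto)
  next
    case False
    show ?thesis
      by (rule separable_rectangle[OF assms(8)]) (use False that assms(1-7) in auto)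
  qed
  show ?thesis
  proof (rule separableI)
    fix x
    assume x: "\<forall>i. i \<notin> K \<longrightarrow> x i = z i"
    have "g x = g (z(p := x p)) + (\<Sum>j\<in>K - {p}. g (z(p := x p, j := x j)) - g (z(p := x p)))"
      by (rule separable_increments[OF assms(10)]) (use assms(1) x in auto)
    also have "\<dots> = g (z(p := x p)) + (\<Sum>j\<in>K - {p}. g (z(j := x j)) - g z)"
      using rect by (intro arg_cong2[where f = "(+)"] sum.cong) auto
    also have "\<dots> = g z + (\<Sum>j\<in>K. g (z(j := x j)) - g z)"
      using sum.remove[OF assms(1,2), of "\<lambda>j. g (z(j := x j)) - g z"] by (simp add: algebra_simps)
    finally show "g x = g z + (\<Sum>j\<in>K. g (z(j := x j)) - g z)" .
  qed
qed

section \<open>Linearity of a single Latin hypercube\<close>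

text \<open>The coefficients \<open>a\<^sub>j\<close> and permutations \<open>\<alpha>\<^sub>j\<close> of the paper are absorbed into the
  one-variable summands of \<^const>\<open>separable\<close>.\<close>

definition linear_at :: "nat set \<Rightarrow> (nat \<Rightarrow> 'a) \<Rightarrow> ((nat \<Rightarrow> 'a) \<Rightarrow> 'a::comm_monoid_add) \<Rightarrow> bool" where
  "linear_at K z f \<longleftrightarrow> (\<exists>\<beta> :: 'a \<Rightarrow> 'a. bij \<beta> \<and> separable K z (\<beta> \<circ> f))"

lemma latin_hypercube_slice_bij:
  assumes "latin_hypercube I f" "z \<in> PiE I (\<lambda>_. UNIV)" "j \<in> I"
  shows "bij (\<lambda>t. f (z(j := t)))"
  using assms unfolding latin_hypercube_def by blast

lemma separable_of_overlap:
  fixes f :: "(nat \<Rightarrow> 'a::{field,finite}) \<Rightarrow> 'a" and \<beta> :: "'a \<Rightarrow> 'a"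
  assumes "prime (card (UNIV :: 'a set))" "latin_hypercube I f" "K \<subseteq> I" "finite K"
    and "L \<subseteq> K" "j \<in> L" "l \<in> L" "j \<noteq> l"
    and "w \<in> PiE I (\<lambda>_. UNIV)" "\<forall>i. i \<notin> K \<longrightarrow> w i = z i"
    and "bij \<beta>" "separable L w (\<beta> \<circ> f)" "linear_at K z f"
  shows "separable K z (\<beta> \<circ> f)"
proof -
  obtain \<gamma> :: "'a \<Rightarrow> 'a" where \<gamma>: "bij \<gamma>" "separable K z (\<gamma> \<circ> f)"
    using assms(13) unfolding linear_at_def by blast
  have fin: "finite L"
    using assms(4,5) finite_subset by blast
  have "separable L w (\<gamma> \<circ> f)"
    using separable_subset[OF _ assms(4,5)] separable_rebase[OF assms(10)] \<gamma>(2) by blast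
  then obtain c d where cd: "\<And>u. \<gamma> u = c * \<beta> u + d"
    using separable_reparametrization_affine[OF assms(1) fin assms(6-8) _ _ assms(11,12)]
      latin_hypercube_slice_bij[OF assms(2,9)] assms(3,5-7) by blast
  have "c \<noteq> 0"
  proof
    assume "c = 0"
    then have "\<gamma> 0 = \<gamma> 1"
      using cd by simp
    then show False
      using bij_is_inj[OF \<gamma>(1)] by (simp add: inj_eq)
  qed
  then have eq: "\<beta> \<circ> f = (\<lambda>x. (1 / c) * (\<gamma> \<circ> f) x + - d / c)"
    using cd by (auto simp: fun_eq_iff field_simps)
  show ?thesis
    unfolding eq by (rule separable_affine[OF \<gamma>(2)])
qed

lemma obtain_three_distinct:
  assumes "finite A" "3 \<le> card A"
  obtains a b c where "a \<in> A" "b \<in> A" "c \<in> A" "a \<noteq> b" "a \<noteq> c" "b \<noteq> c"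
proof -
  obtain S where "S \<subseteq> A" "card S = 3"
    using obtain_subset_with_card_n assms(2) by metis
  then show ?thesis
    using that unfolding card_3_iff by auto
qed

lemma linear_at_step:
  fixes f :: "(nat \<Rightarrow> 'a::{field,finite}) \<Rightarrow> 'a"
  assumes "prime (card (UNIV :: 'a set))" "latin_hypercube I f"
    and "K \<subseteq> I" "finite K" "4 \<le> card K" "z \<in> PiE I (\<lambda>_. UNIV)"
    and IH: "\<And>e w. e \<in> K \<Longrightarrow> w \<in> PiE I (\<lambda>_. UNIV) \<Longrightarrow> linear_at (K - {e}) w f"
  shows "linear_at K z f"
proof -
  obtain p where "p \<in> K"
    using assms(5) by fastforce
  moreover have "3 \<le> card (K - {p})"
    using \<open>p \<in> K\<close> assms(4,5) by simp
  ultimately obtain s s' u where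
    distinct: "p \<in> K" "s \<in> K" "s' \<in> K" "u \<in> K" "p \<noteq> s" "p \<noteq> s'" "p \<noteq> u" "s \<noteq> s'" "s \<noteq> u" "s' \<noteq> u"
    using obtain_three_distinct[of "K - {p}"] assms(4) by (metis Diff_iff finite_Diff insertCI)
  have finite: "finite (K - {e})" for e
    using assms(4) by simp
  have z_upd: "z(p := v) \<in> PiE I (\<lambda>_. UNIV)" for v
    using assms(3,6) distinct(1) by (auto simp: PiE_def extensional_def)
  obtain \<gamma> :: "'a \<Rightarrow> 'a" where \<gamma>: "bij \<gamma>" "separable (K - {s}) z (\<gamma> \<circ> f)"
    using IH[OF distinct(2) assms(6)] unfolding linear_at_def by blast
  (* Since card K \<ge> 4, the overlaps K - {s, s'} and K - {p, s} below contain two coordinates. *)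
  have "separable (K - {s, s'}) z (\<gamma> \<circ> f)"
    by (rule separable_subset[OF \<gamma>(2) finite]) auto
  then have "separable (K - {s'}) z (\<gamma> \<circ> f)"
    using separable_of_overlap[OF assms(1,2) _ finite _ _ _ _ assms(6) _ \<gamma>(1) _ IH[OF distinct(3) assms(6)],
        of "K - {s, s'}" p u] distinct assms(3) by blast
  moreover have "separable (K - {p}) (z(p := v)) (\<gamma> \<circ> f)" for v
  proof -
    have "\<forall>i. i \<notin> K - {s} \<longrightarrow> (z(p := v)) i = z i"
      using distinct by auto
    then have "separable (K - {s}) (z(p := v)) (\<gamma> \<circ> f)"
      using \<gamma>(2) separable_rebase by blast
    then have "separable (K - {p, s}) (z(p := v)) (\<gamma> \<circ> f)"
      by (rule separable_subset[OF _ finite]) auto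
    then show ?thesis
      using separable_of_overlap[OF assms(1,2) _ finite _ _ _ _ z_upd _ \<gamma>(1) _ IH[OF distinct(1) z_upd],
          of "K - {p, s}" s' u] distinct assms(3) by blast
  qed
  ultimately have "separable K z (\<gamma> \<circ> f)"
    using separable_from_slices[OF assms(4) distinct(1,3,2) distinct(6,5)] \<gamma>(2) distinct(8) by auto
  then show ?thesis
    unfolding linear_at_def using \<gamma>(1) by blast
qed

lemma linear_at_of_linear_at_card_3:
  fixes f :: "(nat \<Rightarrow> 'a::{field,finite}) \<Rightarrow> 'a"
  assumes "prime (card (UNIV :: 'a set))" "latin_hypercube I f" "finite I"
    and H3: "\<And>S z. S \<subseteq> I \<Longrightarrow> card S = 3 \<Longrightarrow> z \<in> PiE I (\<lambda>_. UNIV) \<Longrightarrow> linear_at S z f"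
    and "K \<subseteq> I" "3 \<le> card K" "z \<in> PiE I (\<lambda>_. UNIV)"
  shows "linear_at K z f"
  using assms(5-7)
proof (induction "card K" arbitrary: K z rule: less_induct)
  case less
  show ?case
  proof (cases "card K = 3")
    case True
    then show ?thesis
      using H3 less.prems by blast
  next
    case False
    have "finite K"
      using less.prems(1) assms(3) finite_subset by blast
    show ?thesis
    proof (rule linear_at_step[OF assms(1,2) less.prems(1) \<open>finite K\<close> _ less.prems(3)])
      show "4 \<le> card K"
        using False less.prems(2) by simp
      fix e and w :: "nat \<Rightarrow> 'a"
      assume "e \<in> K" "w \<in> PiE I (\<lambda>_. UNIV)"
      moreover have "card (K - {e}) = card K - 1"
        using \<open>e \<in> K\<close> by simp
      ultimately show "linear_at (K - {e}) w f"
        using False less.prems(1,2) by (intro less.hyps) auto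
    qed
  qed
qed

section \<open>Linear tuples\<close>

lemma linear_tuple_subset:
  fixes fs :: "nat \<Rightarrow> (nat \<Rightarrow> 'a::field) \<Rightarrow> 'a"
  assumes "linear_tuple I R fs" "R' \<subseteq> R"
  shows "linear_tuple I R' fs"
proof -
  obtain \<alpha> \<beta> :: "nat \<Rightarrow> 'a \<Rightarrow> 'a" and a :: "nat \<Rightarrow> nat \<Rightarrow> 'a" where "\<forall>j\<in>I. bij (\<alpha> j)" "\<forall>m\<in>R. bij (\<beta> m)"
    "\<forall>m\<in>R. \<forall>x\<in>PiE I (\<lambda>_. UNIV). \<beta> m (fs m x) = (\<Sum>j\<in>I. a m j * \<alpha> j (x j))"
    using assms(1) unfolding linear_tuple_def by blast
  then show ?thesis
    unfolding linear_tuple_def using assms(2) by (intro exI[of _ \<alpha>] exI[of _ \<beta>] exI[of _ a]) blast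
qed

lemma fix_args_restrict_eq:
  assumes "z \<in> PiE I (\<lambda>_. UNIV)" "\<forall>i. i \<notin> S \<longrightarrow> x i = z i"
  shows "fix_args S (restrict z (I - S)) f (restrict x S) = f x"
proof -
  have "(if j \<in> S then restrict x S j else restrict z (I - S) j) = x j" for j
  proof (cases "j \<in> S")
    case False
    then have "restrict z (I - S) j = z j"
      using assms(1) by (cases "j \<in> I") (auto simp: PiE_def extensional_def)
    then show ?thesis
      using False assms(2) by simp
  qed simp
  then show ?thesis
    unfolding fix_args_def by presburger
qed

lemma linear_tuple_fix_args_on_box:
  fixes fs :: "nat \<Rightarrow> (nat \<Rightarrow> 'a::field) \<Rightarrow> 'a"
  assumes "linear_tuple S R (\<lambda>m. fix_args S (restrict z (I - S)) (fs m))"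
    and "z \<in> PiE I (\<lambda>_. UNIV)" "S \<subseteq> I"
  obtains \<sigma> \<beta> :: "nat \<Rightarrow> 'a \<Rightarrow> 'a" and a :: "nat \<Rightarrow> nat \<Rightarrow> 'a"
  where "\<forall>m\<in>R. bij (\<beta> m)"
    and "\<And>m x. m \<in> R \<Longrightarrow> \<forall>i. i \<notin> S \<longrightarrow> x i = z i \<Longrightarrow> \<beta> m (fs m x) = (\<Sum>j\<in>S. a m j * \<sigma> j (x j))"
proof -
  obtain \<sigma> \<beta> :: "nat \<Rightarrow> 'a \<Rightarrow> 'a" and a :: "nat \<Rightarrow> nat \<Rightarrow> 'a"
    where bij: "\<forall>m\<in>R. bij (\<beta> m)"
      and eq: "\<forall>m\<in>R. \<forall>y\<in>PiE S (\<lambda>_. UNIV). \<beta> m (fix_args S (restrict z (I - S)) (fs m) y) = (\<Sum>j\<in>S. a m j * \<sigma> j (y j))"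
    using assms(1) unfolding linear_tuple_def by blast
  have "\<beta> m (fs m x) = (\<Sum>j\<in>S. a m j * \<sigma> j (x j))" if "m \<in> R" "\<forall>i. i \<notin> S \<longrightarrow> x i = z i" for m x
  proof -
    have "\<beta> m (fix_args S (restrict z (I - S)) (fs m) (restrict x S)) = (\<Sum>j\<in>S. a m j * \<sigma> j (restrict x S j))"
      using eq that(1) by simp
    then have "\<beta> m (fs m x) = (\<Sum>j\<in>S. a m j * \<sigma> j (restrict x S j))"
      unfolding fix_args_restrict_eq[OF assms(2) that(2)] .
    also have "\<dots> = (\<Sum>j\<in>S. a m j * \<sigma> j (x j))"
      by (rule sum.cong) simp_all
    finally show ?thesis .
  qed
  then show thesis
    by (rule that[OF bij])
qed

lemma linear_at_of_linear_tuple: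
  fixes fs :: "nat \<Rightarrow> (nat \<Rightarrow> 'a::field) \<Rightarrow> 'a"
  assumes "linear_tuple S R (\<lambda>m. fix_args S (restrict z (I - S)) (fs m))"
    and "z \<in> PiE I (\<lambda>_. UNIV)" "S \<subseteq> I" "m \<in> R"
  shows "linear_at S z (fs m)"
proof -
  obtain \<sigma> \<beta> :: "nat \<Rightarrow> 'a \<Rightarrow> 'a" and a :: "nat \<Rightarrow> nat \<Rightarrow> 'a"
    where bij: "\<forall>m\<in>R. bij (\<beta> m)"
      and eq: "\<And>m x. m \<in> R \<Longrightarrow> \<forall>i. i \<notin> S \<longrightarrow> x i = z i \<Longrightarrow> \<beta> m (fs m x) = (\<Sum>j\<in>S. a m j * \<sigma> j (x j))"
    by (rule linear_tuple_fix_args_on_box[OF assms(1-3)]) blast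
  have "separable S z (\<beta> m \<circ> fs m)"
    by (rule separableI[where c = 0]) (simp add: eq[OF assms(4)])
  then show ?thesis
    unfolding linear_at_def using bij assms(4) by blast
qed

lemma separable_increments_proportional:
  fixes f :: "(nat \<Rightarrow> 'a) \<Rightarrow> 'b::{field,finite}" and \<beta> B :: "'b \<Rightarrow> 'b"
  assumes "prime (card (UNIV :: 'b set))" "finite S" "j \<in> S" "l \<in> S" "j \<noteq> l"
    and "bij (\<lambda>t. f (z(j := t)))" "bij (\<lambda>t. f (z(l := t)))"
    and "bij B" and eq: "\<And>x. \<forall>i. i \<notin> S \<longrightarrow> x i = z i \<Longrightarrow> B (f x) = (\<Sum>i\<in>S. \<psi> i (x i))"
    and "separable S z (\<beta> \<circ> f)"
  shows "\<exists>c. \<forall>t. \<beta> (f (z(j := t))) - \<beta> (f z) = c * (\<psi> j t - \<psi> j (z j))"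
proof -
  have "separable S z (B \<circ> f)"
    by (rule separableI[where c = 0]) (simp add: eq)
  then obtain c d where cd: "\<And>u. \<beta> u = c * B u + d"
    using separable_reparametrization_affine[OF assms(1-8)] assms(10) by blast
  have incr_B: "B (f (z(j := t))) - B (f z) = \<psi> j t - \<psi> j (z j)" for t
  proof -
    have "B (f (z(j := t))) = (\<Sum>i\<in>S. \<psi> i ((z(j := t)) i))"
      using assms(3) by (intro eq) auto
    also have "\<dots> = B (f z) - \<psi> j (z j) + \<psi> j t"
      unfolding sum_fun_upd_eq[OF assms(2,3), of \<psi> z t] eq[of z, simplified] ..
    finally show ?thesis
      by (simp add: algebra_simps)
  qed
  have "\<beta> (f (z(j := t))) - \<beta> (f z) = c * (B (f (z(j := t))) - B (f z))" for t
    unfolding cd by (simp add: algebra_simps)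
  then show ?thesis
    unfolding incr_B by (intro exI allI)
qed

lemma bij_slice_increment_nonzero:
  fixes f :: "(nat \<Rightarrow> 'a::field) \<Rightarrow> 'a" and \<beta> :: "'a \<Rightarrow> 'a"
  assumes "bij \<beta>" "bij (\<lambda>t. f (z(j := t)))"
  shows "\<beta> (f (z(j := z j + 1))) \<noteq> \<beta> (f z)"
proof -
  have "inj (\<lambda>t. \<beta> (f (z(j := t))))"
    using bij_comp[OF assms(2,1)] bij_is_inj by (auto simp: comp_def)
  then show ?thesis
    using injD[of "\<lambda>t. \<beta> (f (z(j := t)))" "z j + 1" "z j"] by auto
qed

lemma linear_pair_increments_proportional:
  fixes fs :: "nat \<Rightarrow> (nat \<Rightarrow> 'a::{field,finite}) \<Rightarrow> 'a" and \<beta> :: "nat \<Rightarrow> 'a \<Rightarrow> 'a"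
  assumes "prime (card (UNIV :: 'a set))" "finite I" "3 \<le> card I" "z \<in> PiE I (\<lambda>_. UNIV)" "j \<in> I"
    and latin: "\<forall>n\<in>{m, m'}. latin_hypercube I (fs n)"
    and pairs: "\<And>S. S \<subseteq> I \<Longrightarrow> card S = 3 \<Longrightarrow> linear_tuple S {m, m'} (\<lambda>n. fix_args S (restrict z (I - S)) (fs n))"
    and sep: "\<forall>n\<in>{m, m'}. bij (\<beta> n) \<and> separable I z (\<beta> n \<circ> fs n)"
  shows "\<exists>\<kappa>. \<forall>t. \<beta> m' (fs m' (z(j := t))) - \<beta> m' (fs m' z) = \<kappa> * (\<beta> m (fs m (z(j := t))) - \<beta> m (fs m z))"
proof -
  obtain l l' where l: "l \<in> I" "l' \<in> I" "j \<noteq> l" "j \<noteq> l'" "l \<noteq> l'"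
    using obtain_three_distinct[OF assms(2,3)] assms(5) by metis
  define S where "S = {j, l, l'}"
  have S: "S \<subseteq> I" "card S = 3" "finite S" "j \<in> S" "l \<in> S"
    using l assms(5) unfolding S_def by auto
  obtain \<sigma> B :: "nat \<Rightarrow> 'a \<Rightarrow> 'a" and a :: "nat \<Rightarrow> nat \<Rightarrow> 'a"
    where bij: "\<forall>n\<in>{m, m'}. bij (B n)"
      and eq: "\<And>n x. n \<in> {m, m'} \<Longrightarrow> \<forall>i. i \<notin> S \<longrightarrow> x i = z i \<Longrightarrow> B n (fs n x) = (\<Sum>i\<in>S. a n i * \<sigma> i (x i))"
    by (rule linear_tuple_fix_args_on_box[OF pairs[OF S(1,2)] assms(4) S(1)]) blast
  have slice: "bij (\<lambda>t. fs n (z(i := t)))" if "n \<in> {m, m'}" "i \<in> S" for n i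
    using latin_hypercube_slice_bij[OF _ assms(4)] latin S(1) that by blast
  have incr: "\<exists>c. \<forall>t. \<beta> n (fs n (z(j := t))) - \<beta> n (fs n z) = c * (\<sigma> j t - \<sigma> j (z j))"
    if n: "n \<in> {m, m'}" for n
  proof -
    have "separable S z (\<beta> n \<circ> fs n)"
      using separable_subset[of I z "\<beta> n \<circ> fs n" S] sep n S(1) assms(2) by blast
    then obtain c where "\<forall>t. \<beta> n (fs n (z(j := t))) - \<beta> n (fs n z) = c * (a n j * \<sigma> j t - a n j * \<sigma> j (z j))"
      using separable_increments_proportional[where \<psi> = "\<lambda>i t. a n i * \<sigma> i t" and \<beta> = "\<beta> n",
          OF assms(1) S(3-5) l(3) slice[OF n S(4)] slice[OF n S(5)] _ eq[OF n]] bij n by blast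
    then have "\<forall>t. \<beta> n (fs n (z(j := t))) - \<beta> n (fs n z) = (c * a n j) * (\<sigma> j t - \<sigma> j (z j))"
      by (simp add: algebra_simps)
    then show ?thesis ..
  qed
  obtain c where c: "\<And>t. \<beta> m (fs m (z(j := t))) - \<beta> m (fs m z) = c * (\<sigma> j t - \<sigma> j (z j))"
    using incr[of m] by blast
  obtain c' where c': "\<And>t. \<beta> m' (fs m' (z(j := t))) - \<beta> m' (fs m' z) = c' * (\<sigma> j t - \<sigma> j (z j))"
    using incr[of m'] by blast
  have "\<beta> m (fs m (z(j := z j + 1))) \<noteq> \<beta> m (fs m z)"
    using bij_slice_increment_nonzero[OF _ slice[OF insertI1 S(4)]] sep by blast
  then have "c \<noteq> 0"
    using c[of "z j + 1"] by auto
  then have "\<beta> m' (fs m' (z(j := t))) - \<beta> m' (fs m' z) = c' / c * (\<beta> m (fs m (z(j := t))) - \<beta> m (fs m z))" for t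
    unfolding c c' by simp
  then show ?thesis
    by (intro exI allI)
qed

lemma linear_tuple_of_proportional_increments:
  fixes fs :: "nat \<Rightarrow> (nat \<Rightarrow> 'a::field) \<Rightarrow> 'a" and \<beta> :: "nat \<Rightarrow> 'a \<Rightarrow> 'a"
  assumes "finite I" "z \<in> PiE I (\<lambda>_. UNIV)" "m\<^sub>0 \<in> R" "latin_hypercube I (fs m\<^sub>0)"
    and sep: "\<forall>m\<in>R. bij (\<beta> m) \<and> separable I z (\<beta> m \<circ> fs m)"
    and proportional: "\<forall>m\<in>R. \<forall>j\<in>I. \<exists>\<kappa>. \<forall>t.
      \<beta> m (fs m (z(j := t))) - \<beta> m (fs m z) = \<kappa> * (\<beta> m\<^sub>0 (fs m\<^sub>0 (z(j := t))) - \<beta> m\<^sub>0 (fs m\<^sub>0 z))"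
  shows "linear_tuple I R fs"
proof -
  define \<alpha> where "\<alpha> j t = \<beta> m\<^sub>0 (fs m\<^sub>0 (z(j := t)))" for j t
  have "\<forall>m\<in>R. \<exists>\<kappa>m. \<forall>j\<in>I. \<forall>t. \<beta> m (fs m (z(j := t))) - \<beta> m (fs m z) = \<kappa>m j * (\<alpha> j t - \<alpha> j (z j))"
  proof
    fix m
    assume "m \<in> R"
    then have "\<forall>j\<in>I. \<exists>\<kappa>. \<forall>t. \<beta> m (fs m (z(j := t))) - \<beta> m (fs m z) = \<kappa> * (\<alpha> j t - \<alpha> j (z j))"
      using proportional unfolding \<alpha>_def fun_upd_triv by blast
    then show "\<exists>\<kappa>m. \<forall>j\<in>I. \<forall>t. \<beta> m (fs m (z(j := t))) - \<beta> m (fs m z) = \<kappa>m j * (\<alpha> j t - \<alpha> j (z j))"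
      by (rule bchoice)
  qed
  then obtain \<kappa> where \<kappa>: "\<forall>m\<in>R. \<forall>j\<in>I. \<forall>t.
      \<beta> m (fs m (z(j := t))) - \<beta> m (fs m z) = \<kappa> m j * (\<alpha> j t - \<alpha> j (z j))"
    by (rule bchoice[THEN exE])
  define C where "C m = \<beta> m (fs m z) - (\<Sum>j\<in>I. \<kappa> m j * \<alpha> j (z j))" for m
  have "bij (\<alpha> j)" if "j \<in> I" for j
  proof -
    have "\<alpha> j = \<beta> m\<^sub>0 \<circ> (\<lambda>t. fs m\<^sub>0 (z(j := t)))"
      by (simp add: \<alpha>_def fun_eq_iff)
    moreover have "bij (\<beta> m\<^sub>0)"
      using sep assms(3) by blast
    ultimately show ?thesis
      using bij_comp[OF latin_hypercube_slice_bij[OF assms(4,2) that]] by simp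
  qed
  moreover have "bij (\<lambda>y. \<beta> m y - C m)" if "m \<in> R" for m
    using bij_comp[OF _ bij_diff_right, of "\<beta> m" "C m"] sep that by (simp add: comp_def)
  moreover have "\<beta> m (fs m x) - C m = (\<Sum>j\<in>I. \<kappa> m j * \<alpha> j (x j))"
    if "m \<in> R" "x \<in> PiE I (\<lambda>_. UNIV)" for m x
  proof -
    have "\<forall>i. i \<notin> I \<longrightarrow> x i = z i"
      using that(2) assms(2) by (auto simp: PiE_def extensional_def)
    then have "\<beta> m (fs m x) = \<beta> m (fs m z) + (\<Sum>j\<in>I. \<beta> m (fs m (z(j := x j))) - \<beta> m (fs m z))"
      using separable_increments[of I z "\<beta> m \<circ> fs m" x] sep that(1) assms(1) by simp
    also have "\<dots> = \<beta> m (fs m z) + (\<Sum>j\<in>I. \<kappa> m j * \<alpha> j (x j) - \<kappa> m j * \<alpha> j (z j))"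
      using \<kappa> that(1) by (simp add: right_diff_distrib)
    finally show ?thesis
      unfolding C_def sum_subtractf by simp
  qed
  ultimately show ?thesis
    unfolding linear_tuple_def
    by (intro exI[of _ \<alpha>] exI[of _ "\<lambda>m y. \<beta> m y - C m"] exI[of _ \<kappa>] conjI) blast+
qed

lemma linear_tuple_of_linear_pairs:
  fixes fs :: "nat \<Rightarrow> (nat \<Rightarrow> 'a::{field,finite}) \<Rightarrow> 'a"
  assumes "prime (card (UNIV :: 'a set))" "finite I" "3 \<le> card I" "m\<^sub>0 \<in> R"
    and latin: "\<forall>m\<in>R. latin_hypercube I (fs m)"
    and pairs: "\<And>m m' S w. m \<in> R \<Longrightarrow> m' \<in> R \<Longrightarrow> S \<subseteq> I \<Longrightarrow> card S = 3 \<Longrightarrow>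
      linear_tuple S {m, m'} (\<lambda>n. fix_args S (restrict w (I - S)) (fs n))"
  shows "linear_tuple I R fs"
proof -
  define z :: "nat \<Rightarrow> 'a" where "z = restrict (\<lambda>_. 0) I"
  have z: "z \<in> PiE I (\<lambda>_. UNIV)"
    unfolding z_def by simp
  have "\<forall>m\<in>R. \<exists>\<beta> :: 'a \<Rightarrow> 'a. bij \<beta> \<and> separable I z (\<beta> \<circ> fs m)"
  proof
    fix m
    assume m: "m \<in> R"
    have "linear_at I z (fs m)"
      using linear_at_of_linear_at_card_3[OF assms(1) latin[rule_format, OF m] assms(2) _ _ assms(3) z]
        linear_at_of_linear_tuple[OF pairs[OF m m] _ _ insertI1] by blast
    then show "\<exists>\<beta> :: 'a \<Rightarrow> 'a. bij \<beta> \<and> separable I z (\<beta> \<circ> fs m)"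
      unfolding linear_at_def .
  qed
  then obtain \<beta> :: "nat \<Rightarrow> 'a \<Rightarrow> 'a" where \<beta>: "\<forall>m\<in>R. bij (\<beta> m) \<and> separable I z (\<beta> m \<circ> fs m)"
    by (rule bchoice[THEN exE])
  have "\<exists>\<kappa>. \<forall>t. \<beta> m (fs m (z(j := t))) - \<beta> m (fs m z) = \<kappa> * (\<beta> m\<^sub>0 (fs m\<^sub>0 (z(j := t))) - \<beta> m\<^sub>0 (fs m\<^sub>0 z))"
    if m: "m \<in> R" and j: "j \<in> I" for m j
    by (rule linear_pair_increments_proportional[OF assms(1-3) z j _ pairs[OF assms(4) m]])
      (use latin \<beta> assms(4) m in auto)
  then show ?thesis
    using linear_tuple_of_proportional_increments[OF assms(2) z assms(4) _ \<beta>] latin assms(4) by blast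
qed

theorem theorem3:
  fixes q r k :: nat
    and fs :: "nat \<Rightarrow> (nat \<Rightarrow> 'a::{field,finite}) \<Rightarrow> 'a"
  assumes "prime q" and "card (UNIV :: 'a set) = q"
    and "r \<ge> 2" and "k \<ge> 4"
    and "\<forall>m \<in> {1..r}. latin_hypercube {1..k} (fs m)"
    and "\<forall>i \<in> {1..r}. \<forall>j \<in> {1..r}. i \<noteq> j \<longrightarrow>
           (\<forall>S c. S \<subseteq> {1..k} \<and> card S = 3 \<and> c \<in> PiE ({1..k} - S) (\<lambda>_. UNIV) \<longrightarrow>
              linear_tuple S {i, j} (\<lambda>m. fix_args S c (fs m)))"
  shows "linear_tuple {1..k} {1..r} fs"
proof (rule linear_tuple_of_linear_pairs[where m\<^sub>0 = 1, OF _ _ _ _ assms(5)])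
  fix m m' S and w :: "nat \<Rightarrow> 'a"
  assume idx: "m \<in> {1..r}" "m' \<in> {1..r}" "S \<subseteq> {1..k}" "card S = 3"
  show "linear_tuple S {m, m'} (\<lambda>n. fix_args S (restrict w ({1..k} - S)) (fs n))"
  proof (cases "m = m'")
    case True
    define m'' where "m'' = (if m = 1 then 2 else 1 :: nat)"
    have "m'' \<in> {1..r}" "m \<noteq> m''"
      using assms(3) idx(1) unfolding m''_def by auto
    then have "linear_tuple S {m, m''} (\<lambda>n. fix_args S (restrict w ({1..k} - S)) (fs n))"
      using assms(6) idx by simp
    then show ?thesis
      using True linear_tuple_subset by fastforce
  qed (use assms(6) idx in simp)
qed (use assms(1-4) in simp_all)

end
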